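(* Let $(Z,d)$ be an infinite compact metric space and $\Gamma$ an essential approximation graph for $Z$. Then $\mathcal I_\Gamma$ is a dense $G_\delta$-subset of $\mathcal P_\Gamma$.
   Context: A refining sequence is a sequence $(\mathcal V_n)_{n\ge0}$ of finite covers of $Z$, all open or all closed with nonempty interiors, with $\mathcal V_0=\{Z\}$, each element of $\mathcal V_{n+1}$ contained in some element of $\mathcal V_n$, and $\max_{v\in\mathcal V_n}\operatorname{diam}v\to0$. Its approximation graph $\Gamma$ has vertices $\coprod_n\mathcal V_n$ and an edge from $v_n\in\mathcal V_n$ to $v_{n+1}\in\mathcal V_{n+1}$ whenever $v_{n+1}\subset v_n$. The infinite path space $\mathcal P_\Gamma$ is the set of sequences of edges $(p_n)_{n\ge0}$, $p_n$ from some $v_n\in\mathcal V_n$ to some $v_{n+1}\in\mathcal V_{n+1}$, consecutive edges sharing their common vertex, with the compact topology generated by cylinder sets (paths with prescribed first finitely many edges). With $r(p_n)=v_{n+1}$, $\pi_\Gamma(\tilde p)$ is the unique point of $\bigcap_n\operatorname{cl}(r(p_n))$. $\mathcal I_\Gamma=\{\tilde p\in\mathcal P_\Gamma:\#\pi_\Gamma^{-1}(\pi_\Gamma(\tilde p))=1\}$. Overlapping set $\mathcal Y_n=\{\operatorname{cl}(v)\cap\operatorname{cl}(w):v\ne w\in\mathcal V_n\}$; $v^{\mathrm{ess}}=\operatorname{int}(v)\setminus\bigcup\mathcal Y_n$, $\mathcal V_n^{\mathrm{ess}}=\{v^{\mathrm{ess}}:v\in\mathcal V_n\}$. $\Gamma$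 is regular if for every $n\in\mathbb N$ and $v\in\mathcal V_n$: $v=\bigcup\{w\in\mathcal V_{n+1}:w\subset v\}$ and $v^{\mathrm{ess}}\ne\varnothing$. $\Gamma$ is essential if it is regular, consists of closed covers, and $\bigcup\mathcal V_n^{\mathrm{ess}}$ is dense in $Z$ for every $n\in\mathbb N$. *)

theory Defs
  imports "HOL-Analysis.Analysis"
begin

text \<open>The compact metric space Z is the whole of the type 'a (a metric space with
  compact UNIV). A sequence of covers is V :: nat => 'a set set.\<close>

definition refining_sequence :: "(nat \<Rightarrow> 'a::metric_space set set) \<Rightarrow> bool" where
  "refining_sequence V \<longleftrightarrow>
     (\<forall>n. finite (V n) \<and> \<Union>(V n) = UNIV \<and> (\<forall>v\<in>V n. interior v \<noteq> {})) \<and>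
     ((\<forall>n. \<forall>v\<in>V n. open v) \<or> (\<forall>n. \<forall>v\<in>V n. closed v)) \<and>
     V 0 = {UNIV} \<and>
     (\<forall>n. \<forall>w\<in>V (Suc n). \<exists>v\<in>V n. w \<subseteq> v) \<and>
     (\<lambda>n. Max (diameter ` V n)) \<longlonglongrightarrow> 0"

definition graph_edges :: "(nat \<Rightarrow> 'a set set) \<Rightarrow> nat \<Rightarrow> ('a set \<times> 'a set) set" where
  "graph_edges V n = {(v, w). v \<in> V n \<and> w \<in> V (Suc n) \<and> w \<subseteq> v}"

definition path_space :: "(nat \<Rightarrow> 'a set set) \<Rightarrow> (nat \<Rightarrow> 'a set \<times> 'a set) set" where
  "path_space V = {p. (\<forall>n. p n \<in> graph_edges V n) \<and> (\<forall>n. snd (p n) = fst (p (Suc n)))}"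

definition cylinder_sets :: "(nat \<Rightarrow> 'a set set) \<Rightarrow> (nat \<Rightarrow> 'a set \<times> 'a set) set set" where
  "cylinder_sets V = {{q \<in> path_space V. \<forall>i<k. q i = p i} | p k. p \<in> path_space V}"

definition path_topology :: "(nat \<Rightarrow> 'a set set) \<Rightarrow> (nat \<Rightarrow> 'a set \<times> 'a set) topology" where
  "path_topology V = topology_generated_by (cylinder_sets V)"

definition path_proj :: "(nat \<Rightarrow> 'a::topological_space set \<times> 'a set) \<Rightarrow> 'a" where
  "path_proj p = (THE x. x \<in> (\<Inter>n. closure (snd (p n))))"

definition injectivity_set :: "(nat \<Rightarrow> 'a::topological_space set set) \<Rightarrow> (nat \<Rightarrow> 'a set \<times> 'a set) set" where
  "injectivity_set V = {p \<in> path_space V.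
      card {q \<in> path_space V. path_proj q = path_proj p} = 1}"

definition overlapping_set :: "(nat \<Rightarrow> 'a::topological_space set set) \<Rightarrow> nat \<Rightarrow> 'a set set" where
  "overlapping_set V n = {closure v \<inter> closure w | v w. v \<in> V n \<and> w \<in> V n \<and> v \<noteq> w}"

definition ess :: "(nat \<Rightarrow> 'a::topological_space set set) \<Rightarrow> nat \<Rightarrow> 'a set \<Rightarrow> 'a set" where
  "ess V n v = interior v - \<Union>(overlapping_set V n)"

definition regular_graph :: "(nat \<Rightarrow> 'a::topological_space set set) \<Rightarrow> bool" where
  "regular_graph V \<longleftrightarrow> (\<forall>n. \<forall>v\<in>V n.
      v = \<Union>{w \<in> V (Suc n). w \<subseteq> v} \<and> ess V n v \<noteq> {})"

definition essential_graph :: "(nat \<Rightarrow> 'a::topological_space set set) \<Rightarrow> bool" where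
  "essential_graph V \<longleftrightarrow> regular_graph V \<and> (\<forall>n. \<forall>v\<in>V n. closed v) \<and>
      (\<forall>n. closure (\<Union>v\<in>V n. ess V n v) = UNIV)"

end

theory Submission
  imports Defs
begin

text \<open>
  Because the covers are closed and shrink to points, a path determines a point, and the paths
  over a point \<open>x\<close> are exactly the chains of cover elements containing \<open>x\<close>. Hence a path is
  the only one over its point iff that point never lies in two distinct elements of a cover, i.e.
  avoids every closed set \<open>\<Union>(overlapping_set V n)\<close>. The projection is continuous, so the
  injectivity set is the preimage of a countable intersection of open sets, a \<open>G\<^sub>\<delta>\<close>.
  For density, Baire's theorem makes the points lying in some essential part at every level dense
  in \<open>Z\<close>; such a point can be found in the (open, nonempty) essential part of the last vertex of
  any finite path, and every continuation of that path through it is the unique path over it.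
\<close>

lemma path_spaceD:
  assumes "p \<in> path_space V"
  shows "fst (p n) \<in> V n" "snd (p n) \<in> V (Suc n)" "snd (p n) \<subseteq> fst (p n)"
    "fst (p (Suc n)) = snd (p n)"
  using assms unfolding path_space_def graph_edges_def by (auto simp: case_prod_beta)

lemma chain_in_path_space:
  assumes "\<And>m. f m \<in> V m" "\<And>m. f (Suc m) \<subseteq> f m"
  shows "(\<lambda>m. (f m, f (Suc m))) \<in> path_space V"
  using assms by (auto simp: path_space_def graph_edges_def)

lemma path_space_prefix_eq:
  assumes p: "p \<in> path_space V" and q: "q \<in> path_space V"
    and same: "\<And>m. m \<le> k \<Longrightarrow> fst (q m) = fst (p m)" and "i < k"
  shows "q i = p i"
proof -
  have "fst (q (Suc i)) = fst (p (Suc i))" "fst (q i) = fst (p i)"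
    using same \<open>i < k\<close> by simp_all
  then show ?thesis
    using path_spaceD(4)[OF p, of i] path_spaceD(4)[OF q, of i] by (simp add: prod_eq_iff)
qed

definition cylinder ::
    "(nat \<Rightarrow> 'a set set) \<Rightarrow> (nat \<Rightarrow> 'a set \<times> 'a set) \<Rightarrow> nat \<Rightarrow> (nat \<Rightarrow> 'a set \<times> 'a set) set"
  where "cylinder V p k = {q \<in> path_space V. \<forall>i<k. q i = p i}"

lemma cylinder_sets_eq: "cylinder_sets V = {cylinder V p k | p k. p \<in> path_space V}"
  by (simp add: cylinder_sets_def cylinder_def)

lemma topspace_path_topology: "topspace (path_topology V) = path_space V"
proof -
  have "p \<in> cylinder V p 0" if "p \<in> path_space V" for p
    using that by (simp add: cylinder_def)
  then have "\<Union>(cylinder_sets V) = path_space V"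
    unfolding cylinder_sets_eq by (auto simp: cylinder_def)
  then show ?thesis
    by (simp add: path_topology_def)
qed

lemma openin_path_topology:
  "openin (path_topology V) S \<longleftrightarrow> S \<subseteq> path_space V \<and> (\<forall>p\<in>S. \<exists>k. cylinder V p k \<subseteq> S)"
proof
  assume "openin (path_topology V) S"
  then have "generate_topology_on (cylinder_sets V) S"
    by (simp add: path_topology_def openin_topology_generated_by_iff)
  then have "\<exists>k. cylinder V p k \<subseteq> S" if "p \<in> S" for p
    using that
  proof (induction arbitrary: p)
    case (Int a b)
    then obtain k1 k2 where "cylinder V p k1 \<subseteq> a" "cylinder V p k2 \<subseteq> b"
      by blast
    then have "cylinder V p (max k1 k2) \<subseteq> a \<inter> b"
      by (auto simp: cylinder_def)
    then show ?case
      by blast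
  next
    case (Basis s)
    then obtain p' k where "s = cylinder V p' k"
      by (auto simp: cylinder_sets_eq)
    with Basis.prems have "cylinder V p k = s"
      by (auto simp: cylinder_def)
    then show ?case
      by blast
  qed blast+
  moreover have "S \<subseteq> path_space V"
    using openin_subset \<open>openin (path_topology V) S\<close> topspace_path_topology by metis
  ultimately show "S \<subseteq> path_space V \<and> (\<forall>p\<in>S. \<exists>k. cylinder V p k \<subseteq> S)"
    by blast
next
  assume S: "S \<subseteq> path_space V \<and> (\<forall>p\<in>S. \<exists>k. cylinder V p k \<subseteq> S)"
  show "openin (path_topology V) S"
  proof (subst openin_subopen, intro ballI)
    fix p
    assume "p \<in> S"
    with S obtain k where "cylinder V p k \<subseteq> S"
      by blast
    moreover have "p \<in> cylinder V p k"
      using S \<open>p \<in> S\<close> by (auto simp: cylinder_def)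
    moreover have "openin (path_topology V) (cylinder V p k)"
      unfolding path_topology_def
      by (rule topology_generated_by_Basis) (use S \<open>p \<in> S\<close> in \<open>auto simp: cylinder_sets_eq\<close>)
    ultimately show "\<exists>T. openin (path_topology V) T \<and> p \<in> T \<and> T \<subseteq> S"
      by blast
  qed
qed

lemma path_topology_closure_of_eq_topspace:
  assumes "\<And>p k. p \<in> path_space V \<Longrightarrow> \<exists>q\<in>S. q \<in> cylinder V p k"
  shows "path_topology V closure_of S = topspace (path_topology V)"
proof (intro antisym closure_of_subset_topspace subsetI)
  fix p
  assume "p \<in> topspace (path_topology V)"
  then show "p \<in> path_topology V closure_of S"
    using assms unfolding in_closure_of openin_path_topology topspace_path_topology by blast
qed

locale closed_refining_sequence =
  fixes V :: "nat \<Rightarrow> 'a::metric_space set set"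
  assumes compact_UNIV: "compact (UNIV :: 'a set)"
    and refining: "refining_sequence V"
    and closed_level: "\<And>n v. v \<in> V n \<Longrightarrow> closed v"
begin

lemma finite_level: "finite (V n)"
  using refining by (simp add: refining_sequence_def)

lemma level_0: "V 0 = {UNIV}"
  using refining by (simp add: refining_sequence_def)

lemma level_nonempty: "v \<in> V n \<Longrightarrow> v \<noteq> {}"
  using refining unfolding refining_sequence_def by (metis interior_empty)

lemma refines: "w \<in> V (Suc n) \<Longrightarrow> \<exists>v\<in>V n. w \<subseteq> v"
  using refining by (simp add: refining_sequence_def)

lemma max_diameter_tendsto_0: "(\<lambda>n. Max (diameter ` V n)) \<longlonglongrightarrow> 0"
  using refining by (simp add: refining_sequence_def)

lemma dist_le_max_diameter:
  assumes "v \<in> V n" "x \<in> v" "y \<in> v"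
  shows "dist x y \<le> Max (diameter ` V n)"
proof -
  have "bounded v"
    using compact_imp_bounded[OF compact_UNIV] bounded_subset by blast
  then have "dist x y \<le> diameter v"
    using diameter_bounded_bound assms(2,3) by blast
  also have "\<dots> \<le> Max (diameter ` V n)"
    using finite_level assms(1) by (intro Max_ge) auto
  finally show ?thesis .
qed

lemma ex1_mem_path:
  assumes p: "p \<in> path_space V"
  shows "\<exists>!x. \<forall>n. x \<in> snd (p n)"
proof (rule ex_ex1I)
  have "(\<Inter>n. snd (p n)) \<noteq> {}"
  proof (rule compact_space_imp_nest)
    show "compact_space (euclidean :: 'a topology)"
      using compact_UNIV by (simp add: compact_space_def)
    show "closedin euclidean (snd (p n))" for n
      by (simp add: closed_level[OF path_spaceD(2)[OF p]])
    show "snd (p n) \<noteq> {}" for n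
      using level_nonempty path_spaceD(2)[OF p] by blast
    show "decseq (\<lambda>n. snd (p n))"
      by (rule decseq_SucI) (metis path_spaceD(3,4)[OF p])
  qed
  then show "\<exists>x. \<forall>n. x \<in> snd (p n)"
    by blast
next
  fix x y
  assume "\<forall>n. x \<in> snd (p n)" "\<forall>n. y \<in> snd (p n)"
  then have "dist x y \<le> Max (diameter ` V (Suc n))" for n
    using dist_le_max_diameter path_spaceD(2)[OF p] by blast
  with LIMSEQ_Suc[OF max_diameter_tendsto_0] have "dist x y \<le> 0"
    by (intro LIMSEQ_le_const) auto
  then show "x = y"
    by simp
qed

lemma path_proj_eq_iff:
  assumes p: "p \<in> path_space V"
  shows "path_proj p = x \<longleftrightarrow> (\<forall>n. x \<in> snd (p n))"
proof -
  have "closure (snd (p n)) = snd (p n)" for n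
    by (simp add: closed_level[OF path_spaceD(2)[OF p]])
  then have proj: "path_proj p = (THE x. \<forall>n. x \<in> snd (p n))"
    by (simp add: path_proj_def)
  show ?thesis
  proof
    assume "path_proj p = x"
    then show "\<forall>n. x \<in> snd (p n)"
      using theI'[OF ex1_mem_path[OF p]] proj by simp
  next
    assume "\<forall>n. x \<in> snd (p n)"
    then show "path_proj p = x"
      using the1_equality[OF ex1_mem_path[OF p]] proj by simp
  qed
qed

lemma path_proj_mem_snd: "p \<in> path_space V \<Longrightarrow> path_proj p \<in> snd (p n)"
  using path_proj_eq_iff by blast

lemma path_proj_mem_fst:
  assumes p: "p \<in> path_space V"
  shows "path_proj p \<in> fst (p n)"
proof (cases n)
  case 0
  then show ?thesis
    using path_spaceD(1)[OF p, of 0] level_0 by simp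
next
  case (Suc m)
  then show ?thesis
    using path_proj_mem_snd[OF p, of m] path_spaceD(4)[OF p, of m] by simp
qed

text \<open>A cylinder of length \<open>N + 1\<close> fixes the cover element \<open>snd (p N)\<close> containing the projection.\<close>

lemma continuous_map_path_proj: "continuous_map (path_topology V) euclidean path_proj"
proof (unfold continuous_map_def topspace_path_topology, intro conjI ballI allI impI)
  fix U :: "'a set"
  assume "openin euclidean U"
  show "openin (path_topology V) {p \<in> path_space V. path_proj p \<in> U}"
    unfolding openin_path_topology
  proof (intro conjI ballI)
    fix p
    assume "p \<in> {p \<in> path_space V. path_proj p \<in> U}"
    then have p: "p \<in> path_space V" and "path_proj p \<in> U"
      by auto
    then obtain r where "r > 0" and ball: "ball (path_proj p) r \<subseteq> U"
      using open_contains_ball \<open>openin euclidean U\<close> by (metis open_openin)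
    then obtain N where N: "\<And>m. m \<ge> N \<Longrightarrow> Max (diameter ` V m) < r"
      using order_tendstoD(2)[OF max_diameter_tendsto_0] unfolding eventually_sequentially by blast
    have "path_proj q \<in> U" if q: "q \<in> path_space V" "q N = p N" for q
    proof -
      have "path_proj q \<in> snd (p N)" "path_proj p \<in> snd (p N)"
        using path_proj_mem_snd q p by metis+
      then have "dist (path_proj p) (path_proj q) \<le> Max (diameter ` V (Suc N))"
        using dist_le_max_diameter path_spaceD(2)[OF p] by blast
      also have "\<dots> < r"
        using N by simp
      finally show ?thesis
        using ball by auto
    qed
    then have "cylinder V p (Suc N) \<subseteq> {p \<in> path_space V. path_proj p \<in> U}"
      by (simp add: cylinder_def subset_iff)
    then show "\<exists>k. cylinder V p k \<subseteq> {p \<in> path_space V. path_proj p \<in> U}"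
      by blast
  qed blast
qed simp

lemma mem_Union_overlapping_set_iff:
  "x \<in> \<Union>(overlapping_set V n) \<longleftrightarrow> (\<exists>v\<in>V n. \<exists>w\<in>V n. v \<noteq> w \<and> x \<in> v \<and> x \<in> w)"
proof
  assume "x \<in> \<Union>(overlapping_set V n)"
  then obtain v w where "v \<in> V n" "w \<in> V n" "v \<noteq> w" "x \<in> closure v" "x \<in> closure w"
    unfolding overlapping_set_def by blast
  moreover have "closure v = v" "closure w = w"
    using closed_level[OF \<open>v \<in> V n\<close>] closed_level[OF \<open>w \<in> V n\<close>] by simp_all
  ultimately show "\<exists>v\<in>V n. \<exists>w\<in>V n. v \<noteq> w \<and> x \<in> v \<and> x \<in> w"
    by metis
next
  assume "\<exists>v\<in>V n. \<exists>w\<in>V n. v \<noteq> w \<and> x \<in> v \<and> x \<in> w"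
  then obtain v w where "v \<in> V n" "w \<in> V n" "v \<noteq> w" "x \<in> v" "x \<in> w"
    by blast
  moreover have "x \<in> closure v \<inter> closure w"
    using closure_subset calculation(4,5) by blast
  ultimately show "x \<in> \<Union>(overlapping_set V n)"
    unfolding overlapping_set_def by blast
qed

lemma closed_Union_overlapping_set: "closed (\<Union>(overlapping_set V n))"
proof (rule closed_Union)
  have "overlapping_set V n \<subseteq> (\<lambda>(v, w). closure v \<inter> closure w) ` (V n \<times> V n)"
    unfolding overlapping_set_def by auto
  then show "finite (overlapping_set V n)"
    using finite_level finite_subset by blast
qed (auto simp: overlapping_set_def)

lemma exists_chain_ending_at:
  "w \<in> V n \<Longrightarrow> \<exists>f. (\<forall>m\<le>n. f m \<in> V m) \<and> (\<forall>m<n. f (Suc m) \<subseteq> f m) \<and> f n = w"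
proof (induction n arbitrary: w)
  case 0
  then show ?case
    by (intro exI[of _ "\<lambda>_. w"]) auto
next
  case (Suc n)
  obtain v where v: "v \<in> V n" "w \<subseteq> v"
    using refines[OF Suc.prems] by blast
  then obtain f where "\<forall>m\<le>n. f m \<in> V m" "\<forall>m<n. f (Suc m) \<subseteq> f m" "f n = v"
    using Suc.IH by blast
  with v Suc.prems show ?case
    by (intro exI[of _ "f(Suc n := w)"]) (simp add: less_Suc_eq le_Suc_eq)
qed

end

locale essential_refining_sequence = closed_refining_sequence +
  assumes essential: "essential_graph V"
begin

lemma exists_child_containing:
  assumes "v \<in> V n" "x \<in> v"
  shows "\<exists>w. w \<in> V (Suc n) \<and> w \<subseteq> v \<and> x \<in> w"
proof -
  have "v = \<Union>{w \<in> V (Suc n). w \<subseteq> v}"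
    using essential assms(1) unfolding essential_graph_def regular_graph_def by blast
  with assms(2) show ?thesis
    by blast
qed

lemma exists_chain_through:
  assumes "u \<in> V k" "x \<in> u"
  shows "\<exists>g. g 0 = u \<and> (\<forall>m. g m \<in> V (k + m) \<and> g (Suc m) \<subseteq> g m \<and> x \<in> g m)"
proof -
  define g where "g = rec_nat u (\<lambda>m c. SOME w. w \<in> V (Suc (k + m)) \<and> w \<subseteq> c \<and> x \<in> w)"
  have step: "g (Suc m) \<in> V (Suc (k + m)) \<and> g (Suc m) \<subseteq> g m \<and> x \<in> g (Suc m)"
    if "g m \<in> V (k + m)" "x \<in> g m" for m
    using someI_ex[OF exists_child_containing[OF that]] by (simp add: g_def)
  have "g m \<in> V (k + m) \<and> x \<in> g m" for m
    by (induction m) (use assms step in \<open>auto simp: g_def\<close>)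
  with step show ?thesis
    by (intro exI[of _ g]) (simp add: g_def)
qed

lemma extend_chain_to_path:
  assumes f: "\<And>m. m \<le> k \<Longrightarrow> f m \<in> V m" "\<And>m. m < k \<Longrightarrow> f (Suc m) \<subseteq> f m"
    and x: "x \<in> f k"
  obtains q where "q \<in> path_space V" "\<And>m. m \<le> k \<Longrightarrow> fst (q m) = f m" "path_proj q = x"
proof -
  obtain g where g: "g 0 = f k" "\<And>m. g m \<in> V (k + m)" "\<And>m. g (Suc m) \<subseteq> g m" "\<And>m. x \<in> g m"
    using exists_chain_through[OF f(1) x] by blast
  define h where "h m = (if m \<le> k then f m else g (m - k))" for m
  have h_level: "h m \<in> V m" for m
    using f(1) g(2)[of "m - k"] by (cases "m \<le> k") (simp_all add: h_def)
  have h_mono: "h (Suc m) \<subseteq> h m" for m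
  proof -
    consider "m < k" | "m = k" | "k < m"
      by linarith
    then show ?thesis
    proof cases
      case 1
      with f(2) show ?thesis
        by (simp add: h_def)
    next
      case 2
      with g(1) g(3)[of 0] show ?thesis
        by (simp add: h_def)
    next
      case 3
      with g(3)[of "m - k"] show ?thesis
        by (simp add: h_def Suc_diff_le)
    qed
  qed
  have h_x: "x \<in> h m" for m
  proof (cases "m \<le> k")
    case True
    have "h k \<subseteq> h m"
      using decseq_SucI[of h, OF h_mono] True by (simp add: decseq_def)
    then show ?thesis
      using x by (auto simp: h_def)
  qed (use g(4) in \<open>simp add: h_def\<close>)
  have q: "(\<lambda>m. (h m, h (Suc m))) \<in> path_space V"
    using chain_in_path_space h_level h_mono by blast
  show ?thesis
  proof (rule that[OF q])
    show "fst (h m, h (Suc m)) = f m" if "m \<le> k" for m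
      using that by (simp add: h_def)
    show "path_proj (\<lambda>m. (h m, h (Suc m))) = x"
      using path_proj_eq_iff[OF q] h_x by simp
  qed
qed

lemma exists_path_through:
  assumes "w \<in> V n" "x \<in> w"
  obtains q where "q \<in> path_space V" "fst (q n) = w" "path_proj q = x"
proof -
  obtain f where "\<forall>m\<le>n. f m \<in> V m" "\<forall>m<n. f (Suc m) \<subseteq> f m" "f n = w"
    using exists_chain_ending_at[OF assms(1)] by blast
  with assms(2) show ?thesis
    by (metis extend_chain_to_path order_refl that)
qed

lemma injectivity_set_eq:
  "injectivity_set V = {p \<in> path_space V. \<forall>n. path_proj p \<notin> \<Union>(overlapping_set V n)}"
proof (intro equalityI subsetI CollectI conjI allI)
  fix p n
  assume "p \<in> injectivity_set V"
  then have p: "p \<in> path_space V"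
    and "card {q \<in> path_space V. path_proj q = path_proj p} = 1"
    by (auto simp: injectivity_set_def)
  then obtain a where fibre: "{q \<in> path_space V. path_proj q = path_proj p} = {a}"
    using card_1_singletonE by blast
  show "path_proj p \<notin> \<Union>(overlapping_set V n)"
  proof
    assume "path_proj p \<in> \<Union>(overlapping_set V n)"
    then obtain v w where "v \<in> V n" "w \<in> V n" "v \<noteq> w" "path_proj p \<in> v" "path_proj p \<in> w"
      using mem_Union_overlapping_set_iff by blast
    moreover obtain q1 q2 where "q1 \<in> path_space V" "fst (q1 n) = v" "path_proj q1 = path_proj p"
      and "q2 \<in> path_space V" "fst (q2 n) = w" "path_proj q2 = path_proj p"
      by (metis exists_path_through calculation(1,2,4,5))
    ultimately have "q1 = a" "q2 = a"
      using fibre by blast+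
    with \<open>fst (q1 n) = v\<close> \<open>fst (q2 n) = w\<close> \<open>v \<noteq> w\<close> show False
      by simp
  qed
  show "p \<in> path_space V"
    by fact
next
  fix p
  assume "p \<in> {p \<in> path_space V. \<forall>n. path_proj p \<notin> \<Union>(overlapping_set V n)}"
  then have p: "p \<in> path_space V" and simple: "\<And>n. path_proj p \<notin> \<Union>(overlapping_set V n)"
    by auto
  have "q = p" if q: "q \<in> path_space V" "path_proj q = path_proj p" for q
  proof -
    have "fst (q m) = fst (p m)" for m
      using simple[of m] path_proj_mem_fst[OF p, of m] path_proj_mem_fst[OF q(1), of m]
        path_spaceD(1)[OF p] path_spaceD(1)[OF q(1)] q(2)
      unfolding mem_Union_overlapping_set_iff by metis
    then show "q = p"
      using path_space_prefix_eq[OF p q(1) _ lessI] by blast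
  qed
  then have "{q \<in> path_space V. path_proj q = path_proj p} = {p}"
    using p by blast
  with p show "p \<in> injectivity_set V"
    by (simp add: injectivity_set_def)
qed

lemma open_ess: "open (ess V n v)"
  unfolding ess_def using closed_Union_overlapping_set by auto

lemma dense_Inter_ess: "closure (\<Inter>n. \<Union>v\<in>V n. ess V n v) = UNIV"
proof -
  have "euclidean closure_of (\<Inter>n. \<Union>v\<in>V n. ess V n v) = topspace euclidean"
  proof (rule Baire_category)
    have "compact_space (euclidean :: 'a topology)"
      using compact_UNIV by (simp add: compact_space_def)
    then show "completely_metrizable_space (euclidean :: 'a topology) \<or>
        locally_compact_space (euclidean :: 'a topology) \<and> regular_space (euclidean :: 'a topology)"
      using compact_imp_locally_compact_space regular_space_euclidean by blast
  next
    fix T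
    assume "T \<in> range (\<lambda>n. \<Union>v\<in>V n. ess V n v)"
    then obtain n where T: "T = (\<Union>v\<in>V n. ess V n v)"
      by blast
    have "closure T = UNIV"
      using essential unfolding essential_graph_def T by blast
    moreover have "open T"
      unfolding T using open_ess by blast
    ultimately show "openin euclidean T \<and> euclidean closure_of T = topspace euclidean"
      by simp
  qed simp
  then show ?thesis
    by simp
qed

lemma injectivity_set_meets_cylinder:
  assumes p: "p \<in> path_space V"
  shows "\<exists>q\<in>injectivity_set V. q \<in> cylinder V p k"
proof -
  let ?v = "fst (p k)"
  have "ess V k ?v \<noteq> {}"
    using essential path_spaceD(1)[OF p] unfolding essential_graph_def regular_graph_def by blast
  then have "ess V k ?v \<inter> (\<Inter>n. \<Union>v\<in>V n. ess V n v) \<noteq> {}"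
    using open_Int_closure_eq_empty[OF open_ess, of k ?v "\<Inter>n. \<Union>v\<in>V n. ess V n v"] dense_Inter_ess
    by simp
  then obtain x where x: "x \<in> ess V k ?v" and "x \<in> (\<Inter>n. \<Union>v\<in>V n. ess V n v)"
    by (meson IntE equals0I)
  then have simple: "\<And>n. x \<notin> \<Union>(overlapping_set V n)"
    by (auto simp: ess_def)
  have "x \<in> ?v"
    using x interior_subset by (auto simp: ess_def)
  obtain q where q: "q \<in> path_space V" "\<And>m. m \<le> k \<Longrightarrow> fst (q m) = fst (p m)"
    "path_proj q = x"
    by (rule extend_chain_to_path[of k "\<lambda>m. fst (p m)" x]) (use \<open>x \<in> ?v\<close> path_spaceD[OF p] in auto)
  then have "q \<in> injectivity_set V"
    using simple by (simp add: injectivity_set_eq)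
  moreover have "q \<in> cylinder V p k"
    using path_space_prefix_eq[OF p q(1,2)] q(1) by (simp add: cylinder_def)
  ultimately show ?thesis
    by blast
qed

lemma gdelta_in_injectivity_set: "gdelta_in (path_topology V) (injectivity_set V)"
proof -
  have "injectivity_set V =
      (\<Inter>n. {p \<in> topspace (path_topology V). path_proj p \<in> - \<Union>(overlapping_set V n)})"
    by (auto simp: injectivity_set_eq topspace_path_topology)
  also have "gdelta_in (path_topology V) \<dots>"
  proof (intro gdelta_in_Inter open_imp_gdelta_in)
    fix S
    assume "S \<in> range (\<lambda>n. {p \<in> topspace (path_topology V). path_proj p \<in> - \<Union>(overlapping_set V n)})"
    then obtain n where S: "S = {p \<in> topspace (path_topology V). path_proj p \<in> - \<Union>(overlapping_set V n)}"
      by blast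
    have "openin euclidean (- \<Union>(overlapping_set V n))"
      using closed_Union_overlapping_set by auto
    from openin_continuous_map_preimage[OF continuous_map_path_proj this]
    show "openin (path_topology V) S"
      unfolding S .
  qed auto
  finally show ?thesis .
qed

lemma dense_injectivity_set:
  "path_topology V closure_of injectivity_set V = topspace (path_topology V)"
  using path_topology_closure_of_eq_topspace injectivity_set_meets_cylinder by blast

end

theorem proposition2p23:
  fixes V :: "nat \<Rightarrow> 'a::metric_space set set"
  assumes "compact (UNIV :: 'a set)"
    and "infinite (UNIV :: 'a set)"
    and "refining_sequence V"
    and "essential_graph V"
  shows "gdelta_in (path_topology V) (injectivity_set V)
       \<and> (path_topology V) closure_of (injectivity_set V) = topspace (path_topology V)"
proof
  interpret essential_refining_sequence V
    using assms(1,3,4) by unfold_locales (auto simp: essential_graph_def)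
  show "gdelta_in (path_topology V) (injectivity_set V)"
    by (rule gdelta_in_injectivity_set)
  show "path_topology V closure_of injectivity_set V = topspace (path_topology V)"
    by (rule dense_injectivity_set)
qed

end
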